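(* Let $f:\mathbb{R}^n\to\mathbb{R}$ be continuously differentiable, $\varphi:\mathbb{R}^n\to\mathbb{R}$ convex, $\psi=f+\varphi$, $\Lambda$ symmetric positive definite, and suppose $\psi$ can be truncated with sets $\mathbb{R}^n=S_0\supset\cdots\supset S_m$. Let $x^*$ be a stationary point of $\psi$ with $x^*\in S_{i^*}\setminus S_{i^*+1}$ (where $S_{m+1}=\emptyset$). Assume (C.1) $\varphi$ is partly smooth at $x^*$ relative to an affine subspace $\mathcal{M}$ and $B_r(x^* )\cap S_{i^*}=B_r(x^* )\cap\mathcal{M}$ for all $r\in(0,\Gamma(x^* ))$; and (C.3) $-\nabla f(x^* )\in\mathrm{ri}\,\partial\varphi(x^* )$. Then there exists $r_0\in(0,\Gamma(x^* ))$ such that for every $x\in B_{r_0}(x^* )\cap\mathcal{M}$, $$F^{\Lambda}_{\mathrm{nor}}(\tau(x))=\psi'(x;d_s(x))\,d_s(x)=\nabla_{\mathcal{M}}\psi(x).$$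
   Context: $\|\cdot\|$ Euclidean norm, $B_r(x)$ open ball, $\mathrm{ri}$ relative interior. $\psi'(x;d)$ directional derivative, $\partial\psi(x)=\nabla f(x)+\partial\varphi(x)$, stationary means $0\in\partial\psi(x)$; $d_s(x)=\arg\min_{\|d\|\le1}\psi'(x;d)$ if $0\notin\partial\psi(x)$ and $d_s(x)=0$ otherwise. $\mathrm{prox}^{\Lambda}_{\varphi}(z)=\arg\min_y\varphi(y)+\frac12(y-z)^T\Lambda(y-z)$; normal map $F^{\Lambda}_{\mathrm{nor}}(z)=\nabla f(\mathrm{prox}^{\Lambda}_{\varphi}(z))+\Lambda(z-\mathrm{prox}^{\Lambda}_{\varphi}(z))$; $\tau(x)=x+\Lambda^{-1}\mathbf{P}_{\partial\varphi(x)}(-\nabla f(x))$ with $\mathbf{P}_C$ the orthogonal projection onto $C$. For $\|d\|=1$, $\Gamma_{\max}(x,d)=\sup\{T>0: t\mapsto\psi(x+td)\text{ is }C^1\text{ on }(0,T)\}$ and $\Gamma(x)=\inf_{\|d\|=1}\Gamma_{\max}(x,d)$. $\psi$ can be truncated means there are sets $\mathbb{R}^n=S_0\supset\cdots\supset S_m$, $\delta\in(0,\infty]$, $\kappa>0$ and $T:\mathbb{R}^n\times(0,\delta]\to\mathbb{R}^n$ with (i) $\Gamma\ge\delta$ on $S_m$; (ii) for $a\in(0,\delta]$, $x\in S_i\setminus S_{i+1}$, $i<m$: if $\Gamma(x)\ge a$ then $T(x,a)=x$, else $T(x,a)\in S_{i+1}$, $\Gamma(T(x,a))\ge a$, $\|T(x,a)-x\|\le\kappa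 a$. Partial smoothness: a proper convex lsc $\varphi$ is partly smooth at $x$ relative to a set $\mathcal{M}\ni x$ if $\partial\varphi(x)\ne\emptyset$ and (i) $\mathcal{M}$ is a $C^2$-manifold around $x$ and $\varphi|_{\mathcal{M}}$ is $C^2$ around $x$; (ii) the tangent space $T_{\mathcal{M}}(x)$ equals $\mathrm{par}(\partial\varphi(x))^\perp$, where $\mathrm{par}(A)=\mathrm{span}(A-A)$; (iii) $\partial\varphi$ is continuous at $x$ relative to $\mathcal{M}$. For affine $\mathcal{M}$, $T_{\mathcal{M}}$ is its direction space; the Riemannian gradient $\nabla_{\mathcal{M}}\psi(x)$ at $x\in\mathcal{M}$ (where $\psi|_{\mathcal{M}}$ is differentiable) is the unique $v\in T_{\mathcal{M}}$ with $\langle v,\xi\rangle=\frac{d}{dt}\psi(x+t\xi)|_{t=0}$ for all $\xi\in T_{\mathcal{M}}$. *)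

theory Defs
  imports "HOL-Analysis.Analysis"
begin

type_synonym 'n vec = "real ^ 'n"

definition grad :: "('n::finite vec \<Rightarrow> real) \<Rightarrow> 'n vec \<Rightarrow> 'n vec" where
  "grad f x = (THE g. (f has_derivative (\<lambda>h. g \<bullet> h)) (at x))"

definition C1_fun :: "('n::finite vec \<Rightarrow> real) \<Rightarrow> bool" where
  "C1_fun f \<longleftrightarrow> (\<exists>g. continuous_on UNIV g \<and> (\<forall>x. (f has_derivative (\<lambda>h. g x \<bullet> h)) (at x)))"

definition C2_on :: "'n::finite vec set \<Rightarrow> ('n vec \<Rightarrow> real) \<Rightarrow> bool" where
  "C2_on U g \<longleftrightarrow> (\<exists>g1 H. (\<forall>y\<in>U. (g has_derivative (\<lambda>h. g1 y \<bullet> h)) (at y)) \<and>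
      (\<forall>y\<in>U. (g1 has_derivative blinfun_apply (H y)) (at y)) \<and> continuous_on U H)"

definition subdiff :: "('n::finite vec \<Rightarrow> real) \<Rightarrow> 'n vec \<Rightarrow> 'n vec set" where
  "subdiff phi x = {v. \<forall>y. phi y \<ge> phi x + v \<bullet> (y - x)}"

definition subdiff_psi :: "('n::finite vec \<Rightarrow> real) \<Rightarrow> ('n vec \<Rightarrow> real) \<Rightarrow> 'n vec \<Rightarrow> 'n vec set" where
  "subdiff_psi f phi x = (\<lambda>v. grad f x + v) ` subdiff phi x"

definition stationary :: "('n::finite vec \<Rightarrow> real) \<Rightarrow> ('n vec \<Rightarrow> real) \<Rightarrow> 'n vec \<Rightarrow> bool" where
  "stationary f phi x \<longleftrightarrow> 0 \<in> subdiff_psi f phi x"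

definition dirderiv :: "('n::finite vec \<Rightarrow> real) \<Rightarrow> 'n vec \<Rightarrow> 'n vec \<Rightarrow> real" where
  "dirderiv psi x d = Lim (at_right (0::real)) (\<lambda>t. (psi (x + t *\<^sub>R d) - psi x) / t)"

definition steepest_dir :: "('n::finite vec \<Rightarrow> real) \<Rightarrow> ('n vec \<Rightarrow> real) \<Rightarrow> 'n vec \<Rightarrow> 'n vec" where
  "steepest_dir f phi x =
     (if 0 \<notin> subdiff_psi f phi x then
        (SOME d. norm d \<le> 1 \<and> (\<forall>e. norm e \<le> 1 \<longrightarrow>
            dirderiv (\<lambda>y. f y + phi y) x d \<le> dirderiv (\<lambda>y. f y + phi y) x e))
      else 0)"

definition prox :: "real^'n^'n \<Rightarrow> ('n::finite vec \<Rightarrow> real) \<Rightarrow> 'n vec \<Rightarrow> 'n vec" where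
  "prox Lam phi z = (SOME y. \<forall>w. phi y + (1/2) * ((y - z) \<bullet> (Lam *v (y - z)))
                               \<le> phi w + (1/2) * ((w - z) \<bullet> (Lam *v (w - z))))"

definition normal_map :: "real^'n^'n \<Rightarrow> ('n::finite vec \<Rightarrow> real) \<Rightarrow> ('n vec \<Rightarrow> real) \<Rightarrow> 'n vec \<Rightarrow> 'n vec" where
  "normal_map Lam f phi z = grad f (prox Lam phi z) + Lam *v (z - prox Lam phi z)"

definition tau :: "real^'n^'n \<Rightarrow> ('n::finite vec \<Rightarrow> real) \<Rightarrow> ('n vec \<Rightarrow> real) \<Rightarrow> 'n vec \<Rightarrow> 'n vec" where
  "tau Lam f phi x = x + matrix_inv Lam *v closest_point (subdiff phi x) (- grad f x)"

text \<open>Gamma_max(x,d) and Gamma(x), valued in the extended reals (sup may be infinite).\<close>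
definition Gamma_max :: "('n::finite vec \<Rightarrow> real) \<Rightarrow> 'n vec \<Rightarrow> 'n vec \<Rightarrow> ereal" where
  "Gamma_max psi x d = Sup (ereal ` {T. T > 0 \<and>
      (\<exists>g'. continuous_on {0<..<T} g' \<and>
            (\<forall>t\<in>{0<..<T}. ((\<lambda>s. psi (x + s *\<^sub>R d)) has_real_derivative g' t) (at t)))})"

definition Gamma :: "('n::finite vec \<Rightarrow> real) \<Rightarrow> 'n vec \<Rightarrow> ereal" where
  "Gamma psi x = Inf (Gamma_max psi x ` {d. norm d = 1})"

definition truncatable ::
  "('n::finite vec \<Rightarrow> real) \<Rightarrow> (nat \<Rightarrow> 'n vec set) \<Rightarrow> nat \<Rightarrow> ereal \<Rightarrow> real
     \<Rightarrow> ('n vec \<Rightarrow> real \<Rightarrow> 'n vec) \<Rightarrow> bool" where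
  "truncatable psi S m \<delta> \<kappa> T \<longleftrightarrow>
     S 0 = UNIV \<and> (\<forall>i<m. S (Suc i) \<subseteq> S i) \<and> \<delta> > 0 \<and> \<kappa> > 0 \<and>
     (\<forall>x\<in>S m. Gamma psi x \<ge> \<delta>) \<and>
     (\<forall>a i x. a > 0 \<and> ereal a \<le> \<delta> \<and> i < m \<and> x \<in> S i - S (Suc i) \<longrightarrow>
        (if Gamma psi x \<ge> ereal a then T x a = x
         else T x a \<in> S (Suc i) \<and> Gamma psi (T x a) \<ge> ereal a \<and> norm (T x a - x) \<le> \<kappa> * a))"

definition aff_dir :: "'n::finite vec set \<Rightarrow> 'n vec set" where
  "aff_dir M = {y - z | y z. y \<in> M \<and> z \<in> M}"

definition par :: "'n::finite vec set \<Rightarrow> 'n vec set" where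
  "par A = span {a - b | a b. a \<in> A \<and> b \<in> A}"

definition orth_comp :: "'n::finite vec set \<Rightarrow> 'n vec set" where
  "orth_comp A = {v. \<forall>w\<in>A. v \<bullet> w = 0}"

text \<open>Continuity (Painleve-Kuratowski: outer and inner semicontinuity) of the
  subdifferential at x relative to M.\<close>
definition subdiff_cont_rel :: "('n::finite vec \<Rightarrow> real) \<Rightarrow> 'n vec set \<Rightarrow> 'n vec \<Rightarrow> bool" where
  "subdiff_cont_rel phi M x \<longleftrightarrow>
     (\<forall>xk vk v. (\<forall>k. xk k \<in> M) \<and> xk \<longlonglongrightarrow> x \<and> (\<forall>k. vk k \<in> subdiff phi (xk k)) \<and> vk \<longlonglongrightarrow> v
        \<longrightarrow> v \<in> subdiff phi x) \<and>
     (\<forall>xk. (\<forall>k. xk k \<in> M) \<and> xk \<longlonglongrightarrow> x \<longrightarrow>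
        (\<forall>v\<in>subdiff phi x. \<exists>vk. (\<forall>k. vk k \<in> subdiff phi (xk k)) \<and> vk \<longlonglongrightarrow> v))"

text \<open>Partial smoothness of phi at x relative to an affine set M (an affine set is
  automatically a C^2 manifold; its tangent space is its direction space).
  phi restricted to M is C^2 around x: it agrees near x on M with a C^2 function.\<close>
definition partly_smooth_affine :: "('n::finite vec \<Rightarrow> real) \<Rightarrow> 'n vec \<Rightarrow> 'n vec set \<Rightarrow> bool" where
  "partly_smooth_affine phi x M \<longleftrightarrow>
     affine M \<and> x \<in> M \<and> subdiff phi x \<noteq> {} \<and>
     (\<exists>U g. open U \<and> x \<in> U \<and> C2_on U g \<and> (\<forall>y\<in>U \<inter> M. phi y = g y)) \<and>
     aff_dir M = orth_comp (par (subdiff phi x)) \<and>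
     subdiff_cont_rel phi M x"

definition riem_grad :: "('n::finite vec \<Rightarrow> real) \<Rightarrow> 'n vec set \<Rightarrow> 'n vec \<Rightarrow> 'n vec" where
  "riem_grad psi M x = (THE v. v \<in> aff_dir M \<and>
      (\<forall>\<xi>\<in>aff_dir M. ((\<lambda>t. psi (x + t *\<^sub>R \<xi>)) has_real_derivative (v \<bullet> \<xi>)) (at 0)))"

end

theory Submission
  imports Defs
begin

text \<open>
  For x on M near xs there is a subgradient w of phi at x such that g = grad f x + w is tangent
  to M; otherwise unit normals separating grad f x + subdiff phi x from the tangent space would
  converge to a unit vector of par (subdiff phi xs), and inner semicontinuity of the
  subdifferential would carry the relative interior point - grad f xs, pushed slightly along that
  vector, into a contradiction. Since phi is smooth along M, all subgradients at x have the same
  tangential part, so g is orthogonal to w - subdiff phi x. Consequently w is the projection of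
  - grad f x onto subdiff phi x, prox maps tau x back to x and the normal map returns g; the
  directional derivative satisfies psi'(x; d) \<ge> g \<bullet> d with equality for tangent d, so the
  steepest descent direction is - g / norm g; and g is the Riemannian gradient.

  The radius bound needs Gamma xs > 0. Truncation gives points arbitrarily close to xs with
  Gamma \<ge> c, and this bound passes to xs: the symmetric defect phi'(p; e) + phi'(p; - e) of a
  convex function is continuous in e and vanishes for the directions in which nearby points see
  psi as C1, so phi is differentiable along every ray of length c from xs.
\<close>

section \<open>One-sided directional derivatives of convex functions\<close>

lemma convex_on_line:
  fixes phi :: "'a::real_vector \<Rightarrow> real"
  assumes "convex_on UNIV phi"
  shows "convex_on UNIV (\<lambda>t. phi (p + t *\<^sub>R e))"
proof (rule convex_onI)
  fix u s t :: real assume u: "0 < u" "u < 1"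
  have "p + ((1 - u) *\<^sub>R s + u *\<^sub>R t) *\<^sub>R e = (1 - u) *\<^sub>R (p + s *\<^sub>R e) + u *\<^sub>R (p + t *\<^sub>R e)"
    by (simp add: algebra_simps)
  then show "phi (p + ((1 - u) *\<^sub>R s + u *\<^sub>R t) *\<^sub>R e) \<le> (1 - u) * phi (p + s *\<^sub>R e) + u * phi (p + t *\<^sub>R e)"
    using convex_onD[OF assms, of u] u by simp
qed simp

lemma convex_difference_quotient_mono:
  fixes phi :: "'a::real_vector \<Rightarrow> real"
  assumes "convex_on UNIV phi" "0 < s" "s \<le> t"
  shows "(phi (p + s *\<^sub>R e) - phi p) / s \<le> (phi (p + t *\<^sub>R e) - phi p) / t"
proof (cases "s = t")
  case False
  then show ?thesis
    using convex_on_slope_le(1)[OF convex_on_line[OF assms(1)], of 0 t s p e] assms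
    by (simp add: field_simps)
qed simp

lemma convex_difference_quotient_ge:
  fixes phi :: "'a::real_vector \<Rightarrow> real"
  assumes "convex_on UNIV phi" "0 < t"
  shows "phi p - phi (p - e) \<le> (phi (p + t *\<^sub>R e) - phi p) / t"
  using convex_on_slope_le[OF convex_on_line[OF assms(1)], of "-1" t 0 p e] assms
  by (simp add: field_simps)

lemma tendsto_convex_difference_quotient:
  fixes phi :: "'a::real_vector \<Rightarrow> real" and p e :: 'a
  assumes "convex_on UNIV phi"
  defines "q \<equiv> \<lambda>t. (phi (p + t *\<^sub>R e) - phi p) / t"
  shows "(q \<longlongrightarrow> Inf (q ` {0<..})) (at_right 0)"
  using Lim_right_bound[of UNIV 0 q "phi p - phi (p - e)"]
    convex_difference_quotient_mono[OF assms(1)] convex_difference_quotient_ge[OF assms(1)]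
  unfolding q_def by simp

lemma tendsto_dirderiv_convex:
  fixes phi :: "'n::finite vec \<Rightarrow> real"
  assumes "convex_on UNIV phi"
  shows "((\<lambda>t. (phi (p + t *\<^sub>R e) - phi p) / t) \<longlongrightarrow> dirderiv phi p e) (at_right 0)"
proof -
  note lim = tendsto_convex_difference_quotient[OF assms, of p e]
  then have "dirderiv phi p e = Inf ((\<lambda>t. (phi (p + t *\<^sub>R e) - phi p) / t) ` {0<..})"
    unfolding dirderiv_def by (rule tendsto_Lim[OF trivial_limit_at_right_real])
  with lim show ?thesis by simp
qed

lemma subgradient_inner_le_dirderiv:
  fixes phi :: "'n::finite vec \<Rightarrow> real"
  assumes "convex_on UNIV phi" "w \<in> subdiff phi p"
  shows "w \<bullet> e \<le> dirderiv phi p e"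
proof (rule tendsto_lowerbound[OF tendsto_dirderiv_convex[OF assms(1)] _ trivial_limit_at_right_real])
  have quotient_ge: "w \<bullet> e \<le> (phi (p + t *\<^sub>R e) - phi p) / t" if "0 < t" for t
  proof -
    have "phi p + w \<bullet> (p + t *\<^sub>R e - p) \<le> phi (p + t *\<^sub>R e)"
      using assms(2) unfolding subdiff_def by blast
    then have "phi p + t * (w \<bullet> e) \<le> phi (p + t *\<^sub>R e)" by simp
    then show ?thesis using that by (simp add: pos_le_divide_eq mult.commute)
  qed
  show "\<forall>\<^sub>F t in at_right 0. w \<bullet> e \<le> (phi (p + t *\<^sub>R e) - phi p) / t"
    using eventually_at_right_less[of "0::real"] by (rule eventually_mono) (rule quotient_ge)
qed

lemma has_real_derivative_line_iff:
  fixes phi :: "'a::real_normed_vector \<Rightarrow> real"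
  shows "((\<lambda>t. phi (p + t *\<^sub>R e)) has_real_derivative D) (at 0) \<longleftrightarrow>
     ((\<lambda>t. (phi (p + t *\<^sub>R e) - phi p) / t) \<longlongrightarrow> D) (at_right 0) \<and>
     ((\<lambda>t. (phi (p + t *\<^sub>R (- e)) - phi p) / t) \<longlongrightarrow> - D) (at_right 0)"
proof -
  have reflect: "(\<lambda>t. (phi (p + (- t) *\<^sub>R e) - phi p) / (- t))
      = (\<lambda>t. - ((phi (p + t *\<^sub>R (- e)) - phi p) / t))"
    by (simp add: divide_simps)
  have "((\<lambda>t. (phi (p + t *\<^sub>R e) - phi p) / t) \<longlongrightarrow> D) (at_left 0) \<longleftrightarrow>
      ((\<lambda>t. (phi (p + t *\<^sub>R (- e)) - phi p) / t) \<longlongrightarrow> - D) (at_right 0)"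
    unfolding filterlim_at_left_to_right[of _ _ 0] reflect
    by (simp add: tendsto_minus_cancel_left)
  then show ?thesis
    unfolding has_field_derivative_iff filterlim_at_split[of _ _ 0] by auto
qed

lemma dirderiv_convex_if_has_derivative:
  fixes phi :: "'n::finite vec \<Rightarrow> real"
  assumes "convex_on UNIV phi" "((\<lambda>t. phi (p + t *\<^sub>R e)) has_real_derivative D) (at 0)"
  shows "dirderiv phi p e = D" "dirderiv phi p (- e) = - D"
  using assms(2) unfolding has_real_derivative_line_iff
  by (auto intro: tendsto_unique[OF trivial_limit_at_right_real tendsto_dirderiv_convex[OF assms(1)]])

lemma has_derivative_if_dirderiv_convex_antisym:
  fixes phi :: "'n::finite vec \<Rightarrow> real"
  assumes "convex_on UNIV phi" "dirderiv phi p (- e) = - dirderiv phi p e"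
  shows "((\<lambda>t. phi (p + t *\<^sub>R e)) has_real_derivative dirderiv phi p e) (at 0)"
  unfolding has_real_derivative_line_iff
  using tendsto_dirderiv_convex[OF assms(1), of p e] tendsto_dirderiv_convex[OF assms(1), of p "- e"]
  by (simp add: assms(2))

lemma convex_on_dirderiv:
  fixes phi :: "'n::finite vec \<Rightarrow> real"
  assumes "convex_on UNIV phi"
  shows "convex_on UNIV (dirderiv phi p)"
proof (rule convex_onI)
  fix u :: real and a b :: "'n vec" assume u: "0 < u" "u < 1"
  let ?q = "\<lambda>e t. (phi (p + t *\<^sub>R e) - phi p) / t"
  have quotient_convex: "?q ((1 - u) *\<^sub>R a + u *\<^sub>R b) t \<le> (1 - u) * ?q a t + u * ?q b t"
    if "0 < t" for t
  proof -
    have eq: "p + t *\<^sub>R ((1 - u) *\<^sub>R a + u *\<^sub>R b) = (1 - u) *\<^sub>R (p + t *\<^sub>R a) + u *\<^sub>R (p + t *\<^sub>R b)"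
      by (simp add: algebra_simps)
    have "phi (p + t *\<^sub>R ((1 - u) *\<^sub>R a + u *\<^sub>R b)) \<le> (1 - u) * phi (p + t *\<^sub>R a) + u * phi (p + t *\<^sub>R b)"
      unfolding eq using convex_onD[OF assms, of u "p + t *\<^sub>R a" "p + t *\<^sub>R b"] u by simp
    then have "phi (p + t *\<^sub>R ((1 - u) *\<^sub>R a + u *\<^sub>R b)) - phi p
        \<le> (1 - u) * (phi (p + t *\<^sub>R a) - phi p) + u * (phi (p + t *\<^sub>R b) - phi p)"
      by (simp add: left_diff_distrib right_diff_distrib)
    from divide_right_mono[OF this, of t] that show ?thesis
      by (simp add: add_divide_distrib)
  qed
  have ev: "\<forall>\<^sub>F t in at_right 0. ?q ((1 - u) *\<^sub>R a + u *\<^sub>R b) t \<le> (1 - u) * ?q a t + u * ?q b t"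
    using eventually_at_right_less[of "0::real"] by (rule eventually_mono) (rule quotient_convex)
  have lim: "((\<lambda>t. (1 - u) * ?q a t + u * ?q b t) \<longlongrightarrow> (1 - u) * dirderiv phi p a + u * dirderiv phi p b)
      (at_right 0)"
    by (intro tendsto_add tendsto_mult_left tendsto_dirderiv_convex[OF assms])
  show "dirderiv phi p ((1 - u) *\<^sub>R a + u *\<^sub>R b) \<le> (1 - u) * dirderiv phi p a + u * dirderiv phi p b"
    using tendsto_le[OF trivial_limit_at_right_real lim tendsto_dirderiv_convex[OF assms] ev] .
qed simp

lemma isCont_dirderiv_convex:
  fixes phi :: "'n::finite vec \<Rightarrow> real"
  assumes "convex_on UNIV phi"
  shows "isCont (dirderiv phi p) e"
  using convex_on_continuous[OF open_UNIV convex_on_dirderiv[OF assms]]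
  by (simp add: continuous_on_eq_continuous_at)

lemma convex_derivative_between_difference_quotients:
  fixes h :: "real \<Rightarrow> real"
  assumes "convex_on UNIV h" "(h has_real_derivative h'c) (at c)" "\<tau> \<noteq> 0"
  shows "min ((h c - h (c - \<tau>)) / \<tau>) ((h (c + \<tau>) - h c) / \<tau>) \<le> h'c"
    and "h'c \<le> max ((h c - h (c - \<tau>)) / \<tau>) ((h (c + \<tau>) - h c) / \<tau>)"
proof -
  have "h'c * (x - c) \<le> h x - h c" for x
    using convex_on_imp_above_tangent[OF assms(1) connected_UNIV, of c x h'c] assms(2) by simp
  from this[of "c - \<tau>"] this[of "c + \<tau>"]
  have "h c - h (c - \<tau>) \<le> h'c * \<tau>" "h'c * \<tau> \<le> h (c + \<tau>) - h c"
    by (simp_all add: algebra_simps)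
  then have "min ((h c - h (c - \<tau>)) / \<tau>) ((h (c + \<tau>) - h c) / \<tau>) \<le> h'c \<and>
      h'c \<le> max ((h c - h (c - \<tau>)) / \<tau>) ((h (c + \<tau>) - h c) / \<tau>)"
  proof (cases "\<tau> > 0")
    case True
    with \<open>h c - h (c - \<tau>) \<le> h'c * \<tau>\<close> \<open>h'c * \<tau> \<le> h (c + \<tau>) - h c\<close>
    have "(h c - h (c - \<tau>)) / \<tau> \<le> h'c" "h'c \<le> (h (c + \<tau>) - h c) / \<tau>"
      by (simp_all add: divide_le_eq le_divide_eq)
    then show ?thesis by linarith
  next
    case False
    with assms(3) have "\<tau> < 0" by simp
    with \<open>h c - h (c - \<tau>) \<le> h'c * \<tau>\<close> \<open>h'c * \<tau> \<le> h (c + \<tau>) - h c\<close>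
    have "h'c \<le> (h c - h (c - \<tau>)) / \<tau>" "(h (c + \<tau>) - h c) / \<tau> \<le> h'c"
      by (simp_all add: neg_divide_le_eq neg_le_divide_eq)
    then show ?thesis by linarith
  qed
  then show "min ((h c - h (c - \<tau>)) / \<tau>) ((h (c + \<tau>) - h c) / \<tau>) \<le> h'c"
    and "h'c \<le> max ((h c - h (c - \<tau>)) / \<tau>) ((h (c + \<tau>) - h c) / \<tau>)"
    by auto
qed

lemma continuous_on_convex_derivative:
  fixes h h' :: "real \<Rightarrow> real"
  assumes cvx: "convex_on UNIV h" and "open I"
    and deriv: "\<And>s. s \<in> I \<Longrightarrow> (h has_real_derivative h' s) (at s)"
  shows "continuous_on I h'"
proof (rule continuous_at_imp_continuous_on, intro ballI)
  fix s assume s: "s \<in> I"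
  define D1 where "D1 = (\<lambda>\<tau>. (h (s + \<tau>) - h s) / \<tau>)"
  define D2 where "D2 = (\<lambda>\<tau>. (h (s + 2 * \<tau>) - h (s + \<tau>)) / \<tau>)"
  have lim1: "(D1 \<longlongrightarrow> h' s) (at 0)"
    using deriv[OF s] unfolding DERIV_def D1_def .
  have "((\<lambda>\<tau>. s + 2 * \<tau>) has_real_derivative 2) (at 0)"
    by (auto intro!: derivative_eq_intros)
  then have "((\<lambda>\<tau>. h (s + 2 * \<tau>)) has_real_derivative h' s * 2) (at 0)"
    using DERIV_chain2[of h "h' s" "\<lambda>\<tau>. s + 2 * \<tau>" 0 2 UNIV] deriv[OF s] by simp
  then have "((\<lambda>\<tau>. (h (s + 2 * \<tau>) - h s) / \<tau> - D1 \<tau>) \<longlongrightarrow> h' s * 2 - h' s) (at 0)"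
    using lim1 unfolding DERIV_def by (intro tendsto_diff) simp_all
  moreover have "(\<lambda>\<tau>. (h (s + 2 * \<tau>) - h s) / \<tau> - D1 \<tau>) = D2"
    unfolding D1_def D2_def by (simp add: diff_divide_distrib)
  ultimately have lim2: "(D2 \<longlongrightarrow> h' s) (at 0)" by simp
  have "open ((\<lambda>\<tau>. s + \<tau>) -` I)"
    by (intro continuous_open_vimage \<open>open I\<close> continuous_intros)
  then have near: "\<forall>\<^sub>F \<tau> in at 0. \<tau> \<in> (\<lambda>\<tau>. s + \<tau>) -` I - {0}"
    using s by (intro eventually_at_in_open) auto
  \<comment> \<open>h' (s + \<tau>) lies between the slopes of h over the two intervals of length \<tau> next to
    s + \<tau>, and both slopes tend to h' s\<close>
  have pointwise: "min (D1 \<tau>) (D2 \<tau>) \<le> h' (s + \<tau>) \<and> h' (s + \<tau>) \<le> max (D1 \<tau>) (D2 \<tau>)"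
    if "s + \<tau> \<in> I" "\<tau> \<noteq> 0" for \<tau>
    using convex_derivative_between_difference_quotients[OF cvx deriv[OF that(1)] that(2)]
    unfolding D1_def D2_def by (simp add: add.assoc)
  have "((\<lambda>\<tau>. h' (s + \<tau>)) \<longlongrightarrow> h' s) (at 0)"
  proof (rule tendsto_sandwich)
    show "\<forall>\<^sub>F \<tau> in at 0. min (D1 \<tau>) (D2 \<tau>) \<le> h' (s + \<tau>)"
      using near by (rule eventually_mono) (simp add: pointwise)
    show "\<forall>\<^sub>F \<tau> in at 0. h' (s + \<tau>) \<le> max (D1 \<tau>) (D2 \<tau>)"
      using near by (rule eventually_mono) (simp add: pointwise)
  qed (use tendsto_min[OF lim1 lim2] tendsto_max[OF lim1 lim2] in simp_all)
  then show "isCont h' s"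
    unfolding isCont_def by (rule LIM_offset_zero_cancel)
qed

section \<open>Differentiability along lines and the radius Gamma\<close>

lemma has_real_derivative_line:
  fixes f :: "'a::real_inner \<Rightarrow> real"
  assumes "(f has_derivative (\<lambda>h. g \<bullet> h)) (at (y + t *\<^sub>R e))"
  shows "((\<lambda>s. f (y + s *\<^sub>R e)) has_real_derivative g \<bullet> e) (at t)"
proof -
  have "((\<lambda>s. y + s *\<^sub>R e) has_derivative (\<lambda>h. h *\<^sub>R e)) (at t)"
    by (auto intro!: derivative_eq_intros)
  from has_derivative_compose[OF this assms]
  have "((\<lambda>s. f (y + s *\<^sub>R e)) has_derivative (\<lambda>h. g \<bullet> (h *\<^sub>R e))) (at t)" .
  moreover have "(\<lambda>h. g \<bullet> (h *\<^sub>R e)) = (*) (g \<bullet> e)"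
    by (rule ext) simp
  ultimately show ?thesis
    unfolding has_field_derivative_def by simp
qed

lemma Gamma_le_Gamma_max: "norm d = 1 \<Longrightarrow> Gamma psi x \<le> Gamma_max psi x d"
  unfolding Gamma_def by (rule INF_lower) simp

lemma has_real_derivative_if_less_Gamma:
  assumes "norm e = 1" "0 < t" "ereal t < Gamma psi u"
  obtains D where "((\<lambda>s. psi (u + s *\<^sub>R e)) has_real_derivative D) (at t)"
proof -
  have "ereal t < Gamma_max psi u e"
    using assms(3) Gamma_le_Gamma_max[OF assms(1)] by (rule less_le_trans)
  then obtain T g' where "t < T" "\<forall>s\<in>{0<..<T}. ((\<lambda>s. psi (u + s *\<^sub>R e)) has_real_derivative g' s) (at s)"
    unfolding Gamma_max_def less_Sup_iff by auto
  then have "((\<lambda>s. psi (u + s *\<^sub>R e)) has_real_derivative g' t) (at t)"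
    using assms(2) by simp
  then show ?thesis by (rule that)
qed

lemma Gamma_geI:
  assumes "0 < c"
    and "\<And>d. norm d = 1 \<Longrightarrow> \<exists>g'. continuous_on {0<..<c} g' \<and>
            (\<forall>t\<in>{0<..<c}. ((\<lambda>s. psi (x + s *\<^sub>R d)) has_real_derivative g' t) (at t))"
  shows "ereal c \<le> Gamma psi x"
  unfolding Gamma_def Gamma_max_def using assms
  by (intro INF_greatest Sup_upper imageI) auto

lemma unit_direction_close:
  fixes x u d :: "'a::real_normed_vector"
  assumes "norm d = 1" "0 < s" "norm (x - u) < \<eta>" "\<eta> \<le> s / 2"
  defines "v \<equiv> x + s *\<^sub>R d - u"
  shows "s / 2 < norm v" "norm v < s + \<eta>" "norm ((1 / norm v) *\<^sub>R v - d) < 4 * \<eta> / s"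
proof -
  have v_sd: "v - s *\<^sub>R d = x - u" unfolding v_def by simp
  have "\<bar>norm v - s\<bar> \<le> norm (v - s *\<^sub>R d)"
    using norm_triangle_ineq3[of v "s *\<^sub>R d"] assms(1,2) by simp
  then have close: "\<bar>norm v - s\<bar> < \<eta>" using assms(3) v_sd by simp
  then show "s / 2 < norm v" "norm v < s + \<eta>" using assms(4) by linarith+
  then have "0 < norm v" using assms(2) by linarith
  have eq: "(1 / norm v) *\<^sub>R v - d = (1 / norm v) *\<^sub>R (v - norm v *\<^sub>R d)"
    using \<open>0 < norm v\<close> by (simp add: algebra_simps)
  have "norm (v - norm v *\<^sub>R d) \<le> norm (v - s *\<^sub>R d) + norm ((s - norm v) *\<^sub>R d)"
    by (rule order_trans[OF _ norm_triangle_ineq]) (simp add: algebra_simps)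
  also have "\<dots> < 2 * \<eta>" using close assms(1,3) v_sd by simp
  finally have "norm ((1 / norm v) *\<^sub>R v - d) < 2 * \<eta> / norm v"
    unfolding eq using \<open>0 < norm v\<close> by (simp add: divide_strict_right_mono)
  also have "\<dots> \<le> 2 * \<eta> / (s / 2)"
    using \<open>s / 2 < norm v\<close> \<open>0 < norm v\<close> assms(2) close by (intro divide_left_mono) auto
  finally show "norm ((1 / norm v) *\<^sub>R v - d) < 4 * \<eta> / s" by simp
qed

lemma convex_line_has_derivative_if_less_Gamma:
  fixes f phi :: "'n::finite vec \<Rightarrow> real"
  assumes gradient: "\<And>x. (f has_derivative (\<lambda>h. G x \<bullet> h)) (at x)"
    and "norm e = 1" "0 < t" "ereal t < Gamma (\<lambda>y. f y + phi y) u"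
  obtains D where "((\<lambda>r. phi (u + t *\<^sub>R e + r *\<^sub>R e)) has_real_derivative D) (at 0)"
proof -
  obtain D where "((\<lambda>s. f (u + s *\<^sub>R e) + phi (u + s *\<^sub>R e)) has_real_derivative D) (at t)"
    using has_real_derivative_if_less_Gamma[OF assms(2-4)] .
  from DERIV_diff[OF this has_real_derivative_line[where y=u and t=t and e=e, OF gradient]]
  have "((\<lambda>s. phi (u + s *\<^sub>R e)) has_real_derivative D - G (u + t *\<^sub>R e) \<bullet> e) (at (0 + t))"
    by simp
  then have "((\<lambda>r. phi (u + (r + t) *\<^sub>R e)) has_real_derivative D - G (u + t *\<^sub>R e) \<bullet> e) (at 0)"
    by (rule DERIV_shift[THEN iffD1])
  moreover have "(\<lambda>r. phi (u + (r + t) *\<^sub>R e)) = (\<lambda>r. phi (u + t *\<^sub>R e + r *\<^sub>R e))"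
    by (simp add: algebra_simps)
  ultimately show ?thesis using that by simp
qed

text \<open>A point u near x with Gamma u \<ge> c sees x + s d at distance less than c, so psi, and
  with it phi, is differentiable at x + s d along the ray from u, whose direction is close to d.\<close>

lemma differentiable_directions_near_closure_Gamma:
  fixes f phi :: "'n::finite vec \<Rightarrow> real"
  assumes gradient: "\<And>x. (f has_derivative (\<lambda>h. G x \<bullet> h)) (at x)"
    and x: "x \<in> closure {u. ereal c \<le> Gamma (\<lambda>y. f y + phi y) u}"
    and d: "norm d = 1" and s: "0 < s" "s < c"
  shows "d \<in> closure {e. \<exists>D. ((\<lambda>r. phi (x + s *\<^sub>R d + r *\<^sub>R e)) has_real_derivative D) (at 0)}"
  unfolding closure_approachable
proof (intro allI impI)
  fix \<epsilon> :: real assume "0 < \<epsilon>"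
  define \<eta> where "\<eta> = min (s / 2) (min (c - s) (\<epsilon> * s / 4))"
  have \<eta>: "0 < \<eta>" "\<eta> \<le> s / 2" "\<eta> \<le> c - s" "\<eta> \<le> \<epsilon> * s / 4"
    unfolding \<eta>_def using s \<open>0 < \<epsilon>\<close>
    by (simp, simp_all only: min_le_iff_disj order_refl simp_thms)
  then obtain u where u: "dist u x < \<eta>" "ereal c \<le> Gamma (\<lambda>y. f y + phi y) u"
    using x unfolding closure_approachable by blast
  define v where "v = x + s *\<^sub>R d - u"
  define e where "e = (1 / norm v) *\<^sub>R v"
  have "norm (x - u) < \<eta>" using u(1) by (simp add: dist_norm norm_minus_commute)
  from unit_direction_close[OF d s(1) this \<eta>(2)]
  have v: "s / 2 < norm v" "norm v < s + \<eta>" and ed: "norm (e - d) < 4 * \<eta> / s"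
    unfolding v_def[symmetric] e_def[symmetric] by simp_all
  have "0 < norm v" using v(1) s by linarith
  then have "norm e = 1" by (simp add: e_def)
  have "ereal (norm v) < ereal c" using v(2) \<eta>(3) by simp
  then have "ereal (norm v) < Gamma (\<lambda>y. f y + phi y) u" using u(2) by (rule less_le_trans)
  from convex_line_has_derivative_if_less_Gamma[OF gradient \<open>norm e = 1\<close> \<open>0 < norm v\<close> this]
  obtain D where "((\<lambda>r. phi (u + norm v *\<^sub>R e + r *\<^sub>R e)) has_real_derivative D) (at 0)" .
  moreover have "u + norm v *\<^sub>R e = x + s *\<^sub>R d"
    using \<open>0 < norm v\<close> by (simp add: e_def v_def)
  moreover have "4 * \<eta> / s \<le> \<epsilon>"
    using s \<eta>(4) by (simp add: divide_le_eq)
  ultimately show "\<exists>e\<in>{e. \<exists>D. ((\<lambda>r. phi (x + s *\<^sub>R d + r *\<^sub>R e)) has_real_derivative D) (at 0)}.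
      dist e d < \<epsilon>"
    using ed by (auto simp: dist_norm)
qed

lemma dirderiv_antisym_if_closure_Gamma:
  fixes f phi :: "'n::finite vec \<Rightarrow> real"
  assumes gradient: "\<And>x. (f has_derivative (\<lambda>h. G x \<bullet> h)) (at x)"
    and cvx: "convex_on UNIV phi"
    and x: "x \<in> closure {u. ereal c \<le> Gamma (\<lambda>y. f y + phi y) u}"
    and d: "norm d = 1" and s: "0 < s" "s < c"
  shows "dirderiv phi (x + s *\<^sub>R d) (- d) = - dirderiv phi (x + s *\<^sub>R d) d"
proof -
  define F where "F = (\<lambda>e. dirderiv phi (x + s *\<^sub>R d) e + dirderiv phi (x + s *\<^sub>R d) (- e))"
  have "continuous_on UNIV F"
    unfolding F_def continuous_on_eq_continuous_at[OF open_UNIV]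
    by (intro ballI continuous_intros isCont_dirderiv_convex[OF cvx]
        isCont_o2[OF _ isCont_dirderiv_convex[OF cvx]])
  then have "closed {e. F e = 0}"
    by (intro closed_Collect_eq continuous_on_const)
  moreover have "{e. \<exists>D. ((\<lambda>r. phi (x + s *\<^sub>R d + r *\<^sub>R e)) has_real_derivative D) (at 0)} \<subseteq> {e. F e = 0}"
    unfolding F_def using dirderiv_convex_if_has_derivative[OF cvx] by auto
  ultimately have "F d = 0"
    using differentiable_directions_near_closure_Gamma[OF gradient x d s] closure_minimal by blast
  then show ?thesis unfolding F_def by simp
qed

lemma Gamma_ge_if_closure:
  fixes f phi :: "'n::finite vec \<Rightarrow> real"
  assumes gradient: "\<And>x. (f has_derivative (\<lambda>h. G x \<bullet> h)) (at x)"
    and G: "continuous_on UNIV G" and cvx: "convex_on UNIV phi" and "0 < c"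
    and x: "x \<in> closure {u. ereal c \<le> Gamma (\<lambda>y. f y + phi y) u}"
  shows "ereal c \<le> Gamma (\<lambda>y. f y + phi y) x"
proof (rule Gamma_geI[OF \<open>0 < c\<close>])
  fix d :: "'n vec" assume d: "norm d = 1"
  have phi_deriv: "((\<lambda>s. phi (x + s *\<^sub>R d)) has_real_derivative dirderiv phi (x + s *\<^sub>R d) d) (at s)"
    if "s \<in> {0<..<c}" for s
  proof -
    have "((\<lambda>r. phi (x + s *\<^sub>R d + r *\<^sub>R d)) has_real_derivative dirderiv phi (x + s *\<^sub>R d) d) (at 0)"
      using that by (intro has_derivative_if_dirderiv_convex_antisym[OF cvx]
          dirderiv_antisym_if_closure_Gamma[OF gradient cvx x d]) auto
    moreover have "(\<lambda>r. phi (x + s *\<^sub>R d + r *\<^sub>R d)) = (\<lambda>r. phi (x + (r + s) *\<^sub>R d))"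
      by (simp add: algebra_simps)
    ultimately show ?thesis
      using DERIV_shift[of "\<lambda>s. phi (x + s *\<^sub>R d)" _ 0 s] by simp
  qed
  show "\<exists>g'. continuous_on {0<..<c} g' \<and>
      (\<forall>t\<in>{0<..<c}. ((\<lambda>s. f (x + s *\<^sub>R d) + phi (x + s *\<^sub>R d)) has_real_derivative g' t) (at t))"
  proof (intro exI conjI ballI)
    show "continuous_on {0<..<c} (\<lambda>s. G (x + s *\<^sub>R d) \<bullet> d + dirderiv phi (x + s *\<^sub>R d) d)"
      by (intro continuous_intros continuous_on_compose2[OF G]
          continuous_on_convex_derivative[OF convex_on_line[OF cvx] _ phi_deriv]) auto
    show "((\<lambda>s. f (x + s *\<^sub>R d) + phi (x + s *\<^sub>R d)) has_real_derivative
        G (x + t *\<^sub>R d) \<bullet> d + dirderiv phi (x + t *\<^sub>R d) d) (at t)" if "t \<in> {0<..<c}" for t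
      by (rule DERIV_add[OF has_real_derivative_line[where y=x and t=t and e=d, OF gradient] phi_deriv[OF that]])
  qed
qed

section \<open>Truncation\<close>

lemma truncatable_closure_step:
  assumes trunc: "truncatable psi S m \<delta> \<kappa> T" and "i < m" and x: "x \<in> closure (S i)"
    and small: "\<forall>a>0. x \<notin> closure {u. ereal a \<le> Gamma psi u}"
  shows "x \<in> closure (S (Suc i))"
  unfolding closure_approachable
proof (intro allI impI)
  fix \<epsilon> :: real assume "0 < \<epsilon>"
  from trunc have "0 < \<delta>" "0 < \<kappa>"
    and step: "\<And>a x. 0 < a \<Longrightarrow> ereal a \<le> \<delta> \<Longrightarrow> x \<in> S i - S (Suc i) \<Longrightarrow>
        (if Gamma psi x \<ge> ereal a then T x a = x
         else T x a \<in> S (Suc i) \<and> Gamma psi (T x a) \<ge> ereal a \<and> norm (T x a - x) \<le> \<kappa> * a)"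
    using \<open>i < m\<close> unfolding truncatable_def by blast+
  obtain a0 where a0: "0 < ereal a0" "ereal a0 < \<delta>" using ereal_dense2[OF \<open>0 < \<delta>\<close>] by blast
  define a where "a = min (\<epsilon> / (2 * \<kappa>)) a0"
  have "0 < a" using a0(1) \<open>0 < \<epsilon>\<close> \<open>0 < \<kappa>\<close> by (simp add: a_def)
  have "ereal a \<le> ereal a0" by (simp add: a_def)
  then have "ereal a \<le> \<delta>" using a0(2) by (rule order.trans[OF _ less_imp_le])
  have "a \<le> \<epsilon> / (2 * \<kappa>)" by (simp add: a_def)
  then have "\<kappa> * a \<le> \<kappa> * (\<epsilon> / (2 * \<kappa>))" using \<open>0 < \<kappa>\<close> by (intro mult_left_mono) auto
  then have "\<kappa> * a \<le> \<epsilon> / 2" using \<open>0 < \<kappa>\<close> by simp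
  from small \<open>0 < a\<close> have "x \<notin> closure {u. ereal a \<le> Gamma psi u}" by blast
  then obtain \<epsilon>0 where "0 < \<epsilon>0" and low: "\<And>u. dist u x < \<epsilon>0 \<Longrightarrow> \<not> ereal a \<le> Gamma psi u"
    unfolding closure_approachable by auto
  obtain w where w: "w \<in> S i" "dist w x < \<epsilon>0" "dist w x < \<epsilon> / 2"
    using x \<open>0 < \<epsilon>0\<close> \<open>0 < \<epsilon>\<close> unfolding closure_approachable by (metis half_gt_zero min_less_iff_conj)
  show "\<exists>y\<in>S (Suc i). dist y x < \<epsilon>"
  proof (cases "w \<in> S (Suc i)")
    case True
    moreover have "dist w x < \<epsilon>" using w(3) zero_le_dist[of w x] by linarith
    ultimately show ?thesis by blast
  next
    case False
    have "\<not> Gamma psi w \<ge> ereal a" using low w(2) by simp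
    then have "T w a \<in> S (Suc i)" "norm (T w a - w) \<le> \<kappa> * a"
      using step[OF \<open>0 < a\<close> \<open>ereal a \<le> \<delta>\<close>, of w] False w(1) by auto
    moreover have "dist (T w a) x \<le> norm (T w a - w) + dist w x"
      by (metis dist_norm dist_triangle)
    ultimately show ?thesis
      using w(3) \<open>\<kappa> * a \<le> \<epsilon> / 2\<close> by (intro bexI[of _ "T w a"]) auto
  qed
qed

lemma truncatable_closure_Gamma_ge:
  assumes trunc: "truncatable psi S m \<delta> \<kappa> T"
  obtains c where "0 < c" "x \<in> closure {u. ereal c \<le> Gamma psi u}"
proof -
  have "\<exists>c>0. x \<in> closure {u. ereal c \<le> Gamma psi u}"
  proof (rule ccontr)
    assume "\<not> (\<exists>c>0. x \<in> closure {u. ereal c \<le> Gamma psi u})"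
    then have small: "\<forall>a>0. x \<notin> closure {u. ereal a \<le> Gamma psi u}" by blast
    have "x \<in> closure (S i)" if "i \<le> m" for i
      using that
    proof (induction i)
      case 0
      then show ?case using trunc by (simp add: truncatable_def)
    next
      case (Suc i)
      then show ?case using truncatable_closure_step[OF trunc _ _ small] by simp
    qed
    then have "x \<in> closure (S m)" by simp
    from trunc have "0 < \<delta>" and "\<forall>u\<in>S m. \<delta> \<le> Gamma psi u"
      unfolding truncatable_def by blast+
    obtain a where "0 < ereal a" "ereal a < \<delta>" using ereal_dense2[OF \<open>0 < \<delta>\<close>] by blast
    then have "S m \<subseteq> {u. ereal a \<le> Gamma psi u}"
      using \<open>\<forall>u\<in>S m. \<delta> \<le> Gamma psi u\<close> by (auto intro: order.trans less_imp_le)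
    then have "x \<in> closure {u. ereal a \<le> Gamma psi u}"
      using closure_mono \<open>x \<in> closure (S m)\<close> by blast
    then show False using small \<open>0 < ereal a\<close> by simp
  qed
  then show ?thesis using that by blast
qed

section \<open>Subdifferentials, affine sets and partial smoothness\<close>

lemma subspace_aff_dir:
  assumes "affine M" "M \<noteq> {}"
  shows "subspace (aff_dir M)"
  unfolding subspace_def
proof (intro conjI ballI allI)
  obtain z where z: "z \<in> M" using assms(2) by blast
  show "0 \<in> aff_dir M" unfolding aff_dir_def using z by force
  fix x y assume "x \<in> aff_dir M" "y \<in> aff_dir M"
  then obtain y1 z1 y2 z2 where e: "x = y1 - z1" "y = y2 - z2" "y1 \<in> M" "z1 \<in> M" "y2 \<in> M" "z2 \<in> M"
    unfolding aff_dir_def by blast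
  have "y1 + 1 *\<^sub>R (y2 - z2) \<in> M" by (rule mem_affine_3_minus) (use assms e in auto)
  moreover have "x + y = (y1 + 1 *\<^sub>R (y2 - z2)) - z1" using e by simp
  ultimately show "x + y \<in> aff_dir M" unfolding aff_dir_def using e by blast
next
  fix c :: real and x assume "x \<in> aff_dir M"
  then obtain y1 z1 where e: "x = y1 - z1" "y1 \<in> M" "z1 \<in> M"
    unfolding aff_dir_def by blast
  have "z1 + c *\<^sub>R (y1 - z1) \<in> M" by (rule mem_affine_3_minus) (use assms e in auto)
  moreover have "c *\<^sub>R x = (z1 + c *\<^sub>R (y1 - z1)) - z1" using e by simp
  ultimately show "c *\<^sub>R x \<in> aff_dir M" unfolding aff_dir_def using e by blast
qed

lemma add_scaleR_aff_dir_mem: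
  assumes "affine M" "x \<in> M" "\<xi> \<in> aff_dir M"
  shows "x + t *\<^sub>R \<xi> \<in> M"
proof -
  obtain y z where "\<xi> = y - z" "y \<in> M" "z \<in> M" using assms(3) unfolding aff_dir_def by blast
  then show ?thesis using mem_affine_3_minus[OF assms(1,2)] by blast
qed

lemma subdiff_eq_Inter_halfspaces:
  "subdiff phi x = (\<Inter>y. {v. (y - x) \<bullet> v \<le> phi y - phi x})"
  unfolding subdiff_def by (auto simp: inner_commute algebra_simps)

lemma convex_subdiff: "convex (subdiff phi x)"
  unfolding subdiff_eq_Inter_halfspaces by (intro convex_INT convex_halfspace_le)

lemma closed_subdiff: "closed (subdiff phi x)"
  unfolding subdiff_eq_Inter_halfspaces by (simp add: closed_INT closed_halfspace_le)

lemma grad_eqI: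
  fixes f :: "'n::finite vec \<Rightarrow> real"
  assumes "(f has_derivative (\<lambda>h. G \<bullet> h)) (at x)"
  shows "grad f x = G"
  unfolding grad_def
proof (rule the_equality)
  fix g assume "(f has_derivative (\<lambda>h. g \<bullet> h)) (at x)"
  then have "(\<lambda>h. g \<bullet> h) = (\<lambda>h. G \<bullet> h)" using has_derivative_unique assms by blast
  then have "(g - G) \<bullet> (g - G) = 0" by (metis inner_diff_left diff_self)
  then show "g = G" by simp
qed (rule assms)

lemma inner_eq_zero_if_bounded_below_on_subspace:
  fixes a :: "'a::real_inner"
  assumes "subspace T" "\<forall>\<tau>\<in>T. b \<le> a \<bullet> \<tau>" "\<tau> \<in> T"
  shows "a \<bullet> \<tau> = 0"
proof (rule ccontr)
  assume "a \<bullet> \<tau> \<noteq> 0"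
  have "((b - 1) / (a \<bullet> \<tau>)) *\<^sub>R \<tau> \<in> T" using assms(1,3) by (simp add: subspace_scale)
  then have "b \<le> a \<bullet> (((b - 1) / (a \<bullet> \<tau>)) *\<^sub>R \<tau>)" using assms(2) by blast
  then show False using \<open>a \<bullet> \<tau> \<noteq> 0\<close> by simp
qed

lemma separating_unit_normal_subspace:
  fixes A T :: "'a::euclidean_space set"
  assumes "convex A" "A \<noteq> {}" "subspace T" "A \<inter> T = {}"
  obtains a where "norm a = 1" "\<forall>\<tau>\<in>T. a \<bullet> \<tau> = 0" "\<forall>z\<in>A. a \<bullet> z \<le> 0"
proof -
  obtain a b where a: "a \<noteq> 0" "\<forall>z\<in>A. a \<bullet> z \<le> b" "\<forall>\<tau>\<in>T. b \<le> a \<bullet> \<tau>"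
    using separating_hyperplane_sets[OF assms(1) subspace_imp_convex[OF assms(3)] assms(2) _ assms(4)]
      subspace_0[OF assms(3)] by blast
  have "b \<le> 0" using a(3) subspace_0[OF assms(3)] by force
  have orth: "\<forall>\<tau>\<in>T. a \<bullet> \<tau> = 0"
    using inner_eq_zero_if_bounded_below_on_subspace[OF assms(3) a(3)] by blast
  show ?thesis
  proof (rule that[of "(1 / norm a) *\<^sub>R a"])
    show "norm ((1 / norm a) *\<^sub>R a) = 1" using a(1) by simp
    show "\<forall>\<tau>\<in>T. (1 / norm a) *\<^sub>R a \<bullet> \<tau> = 0" using orth by simp
    have "a \<bullet> z \<le> 0" if "z \<in> A" for z using a(2) \<open>b \<le> 0\<close> that by force
    then show "\<forall>z\<in>A. (1 / norm a) *\<^sub>R a \<bullet> z \<le> 0"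
      by (simp add: divide_nonpos_nonneg)
  qed
qed

lemma mem_span_if_orthogonal_orth_comp:
  fixes e :: "'n::finite vec"
  assumes "\<forall>z\<in>orth_comp (span P). e \<bullet> z = 0"
  shows "e \<in> span P"
proof -
  obtain y z where yz: "y \<in> span P" "\<And>w. w \<in> span P \<Longrightarrow> orthogonal z w" "e = y + z"
    using orthogonal_subspace_decomp_exists[of P e] by blast
  have "z \<in> orth_comp (span P)" unfolding orth_comp_def using yz(2) by (simp add: orthogonal_def)
  then have "e \<bullet> z = 0" using assms by blast
  moreover have "y \<bullet> z = 0" using yz(2)[OF yz(1)] by (simp add: orthogonal_def inner_commute)
  ultimately have "z \<bullet> z = 0" using yz(3) by (simp add: inner_add_left)
  then show ?thesis using yz by simp
qed

lemma rel_interior_add_par: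
  fixes S :: "'n::finite vec set"
  assumes "v \<in> rel_interior S" "e \<in> par S"
  obtains t where "0 < t" "v + t *\<^sub>R e \<in> S"
proof -
  obtain \<epsilon> where "v \<in> S" "0 < \<epsilon>" and \<epsilon>: "ball v \<epsilon> \<inter> affine hull S \<subseteq> S"
    using assms(1) unfolding mem_rel_interior_ball by blast
  have "{a - b | a b. a \<in> S \<and> b \<in> S} \<subseteq> span ((\<lambda>x. - v + x) ` S)"
  proof clarify
    fix a b assume "a \<in> S" "b \<in> S"
    then have "(- v + a) - (- v + b) \<in> span ((\<lambda>x. - v + x) ` S)"
      by (intro span_diff span_base imageI)
    then show "a - b \<in> span ((\<lambda>x. - v + x) ` S)" by simp
  qed
  then have "par S \<subseteq> span ((\<lambda>x. - v + x) ` S)"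
    unfolding par_def by (rule span_minimal) (rule subspace_span)
  define t where "t = \<epsilon> / (2 * (norm e + 1))"
  have "0 < t"
    unfolding t_def using \<open>0 < \<epsilon>\<close> by (intro divide_pos_pos mult_pos_pos add_nonneg_pos) auto
  have "t *\<^sub>R e \<in> span ((\<lambda>x. - v + x) ` S)"
    using assms(2) \<open>par S \<subseteq> _\<close> by (blast intro: span_mul)
  then have hull: "v + t *\<^sub>R e \<in> affine hull S"
    unfolding affine_hull_span_gen[OF hull_inc[OF \<open>v \<in> S\<close>]] by blast
  have "norm e / (2 * (norm e + 1)) < 1"
    by (simp add: add_nonneg_pos)
  then have "t * norm e < \<epsilon>"
    using mult_strict_left_mono[OF _ \<open>0 < \<epsilon>\<close>] by (fastforce simp: t_def)
  then have "v + t *\<^sub>R e \<in> ball v \<epsilon>"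
    using \<open>0 < t\<close> by (simp add: dist_norm)
  then show ?thesis using that \<open>0 < t\<close> \<epsilon> hull by blast
qed

lemma tangent_subgradient_along_sequence:
  fixes phi :: "'n::finite vec \<Rightarrow> real"
  assumes G: "continuous_on UNIV G"
    and ps: "partly_smooth_affine phi xs M"
    and ri: "- G xs \<in> rel_interior (subdiff phi xs)"
    and X: "\<And>k. X k \<in> M" "X \<longlonglongrightarrow> xs"
  shows "\<exists>k. \<exists>w\<in>subdiff phi (X k). G (X k) + w \<in> aff_dir M"
proof (rule ccontr)
  assume "\<not> ?thesis"
  then have disjoint: "((+) (G (X k)) ` subdiff phi (X k)) \<inter> aff_dir M = {}" for k
    by blast
  define T where "T = aff_dir M"
  have "affine M" "xs \<in> M" and T: "T = orth_comp (par (subdiff phi xs))"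
    and inner_sc: "\<And>v. v \<in> subdiff phi xs \<Longrightarrow>
        \<exists>V. (\<forall>k. V k \<in> subdiff phi (X k)) \<and> V \<longlonglongrightarrow> v"
    using ps X unfolding partly_smooth_affine_def subdiff_cont_rel_def T_def by blast+
  have "subspace T" unfolding T_def using subspace_aff_dir \<open>affine M\<close> \<open>xs \<in> M\<close> by blast
  have "subdiff phi (X k) \<noteq> {}" for k
    using inner_sc[OF rel_interior_subset[THEN subsetD, OF ri]] by blast
  then have "\<exists>a. norm a = 1 \<and> (\<forall>\<tau>\<in>T. a \<bullet> \<tau> = 0) \<and> (\<forall>w\<in>subdiff phi (X k). a \<bullet> (G (X k) + w) \<le> 0)"
    for k
    using separating_unit_normal_subspace[OF _ _ \<open>subspace T\<close> disjoint[of k, folded T_def]]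
    by (simp add: convex_subdiff) blast
  then obtain E where E: "\<And>k. norm (E k) = 1" "\<And>k \<tau>. \<tau> \<in> T \<Longrightarrow> E k \<bullet> \<tau> = 0"
    "\<And>k w. w \<in> subdiff phi (X k) \<Longrightarrow> E k \<bullet> (G (X k) + w) \<le> 0"
    by metis
  obtain e r where "e \<in> sphere 0 1" "strict_mono r" and Er: "(E \<circ> r) \<longlonglongrightarrow> e"
    using compact_sphere[of "0::'n vec" 1] E(1) unfolding compact_def by (metis mem_sphere_0)
  have "e \<bullet> \<tau> = 0" if "\<tau> \<in> T" for \<tau>
    using tendsto_inner[OF Er tendsto_const[of \<tau>]] E(2)[OF that] by (simp add: o_def LIMSEQ_const_iff)
  then have "e \<in> par (subdiff phi xs)"
    unfolding par_def by (intro mem_span_if_orthogonal_orth_comp) (simp add: T[unfolded par_def])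
  then obtain t where "0 < t" and v: "- G xs + t *\<^sub>R e \<in> subdiff phi xs"
    using rel_interior_add_par[OF ri] by blast
  obtain V where V: "\<And>k. V k \<in> subdiff phi (X k)" "V \<longlonglongrightarrow> - G xs + t *\<^sub>R e"
    using inner_sc[OF v] by blast
  have "(\<lambda>k. (E \<circ> r) k \<bullet> (G ((X \<circ> r) k) + (V \<circ> r) k)) \<longlonglongrightarrow> e \<bullet> (G xs + (- G xs + t *\<^sub>R e))"
    using continuous_on_tendsto_compose[OF G LIMSEQ_subseq_LIMSEQ[OF X(2) \<open>strict_mono r\<close>]]
      LIMSEQ_subseq_LIMSEQ[OF V(2) \<open>strict_mono r\<close>]
    by (intro tendsto_intros Er) (simp_all add: o_def)
  moreover have "(E \<circ> r) k \<bullet> (G ((X \<circ> r) k) + (V \<circ> r) k) \<le> 0" for k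
    using E(3) V(1) by simp
  ultimately have "e \<bullet> (t *\<^sub>R e) \<le> 0"
    by (simp add: LIMSEQ_le_const2)
  moreover have "e \<bullet> e = 1"
    using \<open>e \<in> sphere 0 1\<close> by (simp add: power2_norm_eq_inner[symmetric])
  ultimately show False using \<open>0 < t\<close> by simp
qed

lemma tangent_subgradient_near:
  fixes phi :: "'n::finite vec \<Rightarrow> real"
  assumes G: "continuous_on UNIV G"
    and ps: "partly_smooth_affine phi xs M"
    and ri: "- G xs \<in> rel_interior (subdiff phi xs)"
  obtains r where "0 < r" "\<forall>x\<in>ball xs r \<inter> M. \<exists>w\<in>subdiff phi x. G x + w \<in> aff_dir M"
proof (rule ccontr)
  assume "\<not> thesis"
  then have "\<forall>k::nat. \<exists>x. x \<in> ball xs (1 / Suc k) \<inter> M \<and> \<not> (\<exists>w\<in>subdiff phi x. G x + w \<in> aff_dir M)"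
    using that by (metis of_nat_0_less_iff zero_less_Suc zero_less_divide_1_iff)
  then obtain X where X: "\<And>k. X k \<in> ball xs (1 / Suc k) \<inter> M"
    and bad: "\<And>k. \<not> (\<exists>w\<in>subdiff phi (X k). G (X k) + w \<in> aff_dir M)"
    by metis
  have "(\<lambda>k. X k - xs) \<longlonglongrightarrow> 0"
    using X by (intro LIMSEQ_norm_0) (simp add: dist_norm norm_minus_commute)
  then have "X \<longlonglongrightarrow> xs" by (simp add: LIM_zero_iff)
  then show False
    using tangent_subgradient_along_sequence[OF G ps ri, of X] X bad by blast
qed

section \<open>The first-order identities on M\<close>

lemma has_real_derivative_line_if_eq_on_affine:
  fixes phi g :: "'n::finite vec \<Rightarrow> real"
  assumes "affine M" "x \<in> M" "\<xi> \<in> aff_dir M" "open U" "x \<in> U"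
    and g: "(g has_derivative (\<lambda>h. g1 \<bullet> h)) (at x)" and eq: "\<forall>y\<in>U \<inter> M. phi y = g y"
  shows "((\<lambda>t. phi (x + t *\<^sub>R \<xi>)) has_real_derivative g1 \<bullet> \<xi>) (at 0)"
proof (rule has_field_derivative_transform_within_open)
  show "((\<lambda>t. g (x + t *\<^sub>R \<xi>)) has_real_derivative g1 \<bullet> \<xi>) (at 0)"
    using has_real_derivative_line[of g g1 x 0 \<xi>] g by simp
  show "open ((\<lambda>t. x + t *\<^sub>R \<xi>) -` U)"
    by (intro continuous_open_vimage \<open>open U\<close> continuous_intros)
  show "0 \<in> (\<lambda>t. x + t *\<^sub>R \<xi>) -` U" using \<open>x \<in> U\<close> by simp
  fix t assume "t \<in> (\<lambda>t. x + t *\<^sub>R \<xi>) -` U"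
  then show "g (x + t *\<^sub>R \<xi>) = phi (x + t *\<^sub>R \<xi>)"
    using eq add_scaleR_aff_dir_mem[OF assms(1-3)] by simp
qed

lemma subgradient_inner_eq_if_has_derivative:
  fixes phi :: "'n::finite vec \<Rightarrow> real"
  assumes "convex_on UNIV phi" "w \<in> subdiff phi x"
    and "((\<lambda>t. phi (x + t *\<^sub>R \<xi>)) has_real_derivative D) (at 0)"
  shows "w \<bullet> \<xi> = D"
  using subgradient_inner_le_dirderiv[OF assms(1,2), of \<xi>] subgradient_inner_le_dirderiv[OF assms(1,2), of "- \<xi>"]
    dirderiv_convex_if_has_derivative[OF assms(1,3)]
  by simp

lemma dirderiv_add_differentiable:
  fixes f phi :: "'n::finite vec \<Rightarrow> real"
  assumes "(f has_derivative (\<lambda>h. g \<bullet> h)) (at x)" "convex_on UNIV phi"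
  shows "dirderiv (\<lambda>y. f y + phi y) x e = g \<bullet> e + dirderiv phi x e"
proof -
  have "((\<lambda>t. (f (x + t *\<^sub>R e) - f x) / t) \<longlongrightarrow> g \<bullet> e) (at 0)"
    using has_real_derivative_line[of f g x 0 e] assms(1) unfolding DERIV_def by simp
  then have "((\<lambda>t. (f (x + t *\<^sub>R e) - f x) / t) \<longlongrightarrow> g \<bullet> e) (at_right 0)"
    by (simp add: filterlim_at_split)
  then have "((\<lambda>t. (f (x + t *\<^sub>R e) - f x) / t + (phi (x + t *\<^sub>R e) - phi x) / t)
      \<longlongrightarrow> g \<bullet> e + dirderiv phi x e) (at_right 0)"
    by (rule tendsto_add[OF _ tendsto_dirderiv_convex[OF assms(2)]])
  then have "((\<lambda>t. (f (x + t *\<^sub>R e) + phi (x + t *\<^sub>R e) - (f x + phi x)) / t)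
      \<longlongrightarrow> g \<bullet> e + dirderiv phi x e) (at_right 0)"
    by (simp add: diff_divide_distrib add_divide_distrib algebra_simps)
  then show ?thesis
    unfolding dirderiv_def by (rule tendsto_Lim[OF trivial_limit_at_right_real])
qed

lemma closest_point_eq_if_orthogonal:
  fixes S :: "'a::euclidean_space set"
  assumes "convex S" "closed S" "w \<in> S" "\<forall>z\<in>S. (w - z) \<bullet> (a - w) = 0"
  shows "closest_point S a = w"
proof (rule closest_point_unique[OF assms(1-3), symmetric], intro ballI)
  fix z assume "z \<in> S"
  then have "orthogonal (a - w) (w - z)"
    using assms(4) by (simp add: orthogonal_def inner_commute)
  then have "(norm (a - z))\<^sup>2 = (norm (a - w))\<^sup>2 + (norm (w - z))\<^sup>2"
    using norm_add_Pythagorean[of "a - w" "w - z"] by simp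
  then have "(norm (a - w))\<^sup>2 \<le> (norm (a - z))\<^sup>2" by simp
  then show "dist a w \<le> dist a z"
    unfolding dist_norm by (rule power2_le_imp_le) simp
qed

lemma invertible_if_pos_def:
  fixes Lam :: "real^'n^'n"
  assumes "\<forall>v. v \<noteq> 0 \<longrightarrow> 0 < v \<bullet> (Lam *v v)"
  shows "invertible Lam"
proof -
  have "\<forall>x. Lam *v x = 0 \<longrightarrow> x = 0"
    using assms by (metis inner_zero_right less_irrefl)
  then show ?thesis
    using matrix_left_invertible_ker invertible_left_inverse by blast
qed

lemma matrix_vector_mul_matrix_inv:
  fixes Lam :: "real^'n^'n"
  assumes "invertible Lam"
  shows "Lam *v (matrix_inv Lam *v w) = w"
proof -
  have "Lam ** matrix_inv Lam = mat 1"
    using assms unfolding invertible_def matrix_inv_def by (rule someI2_ex) auto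
  then show ?thesis by (metis matrix_vector_mul_assoc matrix_vector_mul_lid)
qed

lemma inner_matrix_vector_symmetric:
  fixes Lam :: "real^'n^'n"
  assumes "transpose Lam = Lam"
  shows "u \<bullet> (Lam *v v) = (Lam *v u) \<bullet> v"
  using dot_lmul_matrix[of u Lam v] vector_transpose_matrix[of u Lam] assms by simp

lemma prox_eq_if_subgradient:
  fixes Lam :: "real^'n^'n" and phi :: "'n vec \<Rightarrow> real"
  assumes sym: "transpose Lam = Lam" and pd: "\<forall>v. v \<noteq> 0 \<longrightarrow> 0 < v \<bullet> (Lam *v v)"
    and w: "w \<in> subdiff phi x" and b: "Lam *v b = w"
  shows "prox Lam phi (x + b) = x"
proof -
  define obj where "obj y = phi y + (1/2) * ((y - (x + b)) \<bullet> (Lam *v (y - (x + b))))" for y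
  have quad: "(a - b) \<bullet> (Lam *v (a - b)) = a \<bullet> (Lam *v a) - 2 * (w \<bullet> a) + b \<bullet> w" for a
    using inner_matrix_vector_symmetric[OF sym, of b a] b
    by (simp add: matrix_vector_mult_diff_distrib inner_diff_left inner_diff_right inner_commute)
  have strict: "obj x < obj y" if "y \<noteq> x" for y
  proof -
    have "phi x + w \<bullet> (y - x) \<le> phi y" using w unfolding subdiff_def by blast
    moreover have "0 < (y - x) \<bullet> (Lam *v (y - x))" using pd that by simp
    moreover have "obj y = phi y + (1/2) * ((y - x) \<bullet> (Lam *v (y - x))) - w \<bullet> (y - x) + (1/2) * (b \<bullet> w)"
      using quad[of "y - x"] by (simp add: obj_def algebra_simps)
    moreover have "obj x = phi x + (1/2) * (b \<bullet> w)"
      using quad[of 0] by (simp add: obj_def)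
    ultimately show ?thesis by simp
  qed
  have "(SOME y. \<forall>z. obj y \<le> obj z) = x"
  proof (rule some_equality)
    show "\<forall>z. obj x \<le> obj z" using strict by (metis order.strict_implies_order order_refl)
    fix y assume "\<forall>z. obj y \<le> obj z"
    then show "y = x" using strict[of y] by (meson not_le)
  qed
  then show ?thesis unfolding prox_def obj_def .
qed

lemma normal_map_tau_eq:
  fixes Lam :: "real^'n^'n" and f phi :: "'n vec \<Rightarrow> real"
  assumes sym: "transpose Lam = Lam" and pd: "\<forall>v. v \<noteq> 0 \<longrightarrow> 0 < v \<bullet> (Lam *v v)"
    and f: "(f has_derivative (\<lambda>h. G \<bullet> h)) (at x)"
    and w: "w \<in> subdiff phi x" and orth: "\<forall>z\<in>subdiff phi x. (w - z) \<bullet> (G + w) = 0"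
  shows "normal_map Lam f phi (tau Lam f phi x) = G + w"
proof -
  have "(w - z) \<bullet> (- G - w) = - ((w - z) \<bullet> (G + w))" for z
    by (simp add: inner_diff_right inner_add_right)
  then have "closest_point (subdiff phi x) (- G) = w"
    using orth by (intro closest_point_eq_if_orthogonal[OF convex_subdiff closed_subdiff w]) simp
  then have tau: "tau Lam f phi x = x + matrix_inv Lam *v w"
    unfolding tau_def grad_eqI[OF f] by simp
  have "Lam *v (matrix_inv Lam *v w) = w"
    by (rule matrix_vector_mul_matrix_inv[OF invertible_if_pos_def[OF pd]])
  with tau show ?thesis
    unfolding normal_map_def using prox_eq_if_subgradient[OF sym pd w] grad_eqI[OF f] by simp
qed

lemma zero_mem_subdiff_psi_iff:
  fixes f phi :: "'n::finite vec \<Rightarrow> real"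
  assumes f: "(f has_derivative (\<lambda>h. G \<bullet> h)) (at x)" and w: "w \<in> subdiff phi x"
    and orth: "\<forall>z\<in>subdiff phi x. (w - z) \<bullet> (G + w) = 0"
  shows "0 \<in> subdiff_psi f phi x \<longleftrightarrow> G + w = 0"
proof
  assume "0 \<in> subdiff_psi f phi x"
  then obtain z where "z \<in> subdiff phi x" "G + z = 0"
    unfolding subdiff_psi_def grad_eqI[OF f] by auto
  then have "G + w = w - z" by (simp add: eq_neg_iff_add_eq_0[symmetric])
  then have "(G + w) \<bullet> (G + w) = 0" using orth \<open>z \<in> subdiff phi x\<close> by simp
  then show "G + w = 0" by simp
next
  assume "G + w = 0"
  then show "0 \<in> subdiff_psi f phi x"
    unfolding subdiff_psi_def grad_eqI[OF f] using w by force
qed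

lemma steepest_dir_scaled_eq:
  fixes f phi :: "'n::finite vec \<Rightarrow> real"
  assumes lower: "\<And>e. g \<bullet> e \<le> dirderiv (\<lambda>y. f y + phi y) x e"
    and exact: "dirderiv (\<lambda>y. f y + phi y) x (- (1 / norm g) *\<^sub>R g) = - norm g"
    and stationary_iff: "0 \<in> subdiff_psi f phi x \<longleftrightarrow> g = 0"
  shows "dirderiv (\<lambda>y. f y + phi y) x (steepest_dir f phi x) *\<^sub>R steepest_dir f phi x = g"
proof (cases "g = 0")
  case True
  then show ?thesis unfolding steepest_dir_def using stationary_iff by simp
next
  case False
  define D where "D = dirderiv (\<lambda>y. f y + phi y) x"
  define ds where "ds = - (1 / norm g) *\<^sub>R g"
  have "norm ds = 1" using False by (simp add: ds_def)
  have "D ds \<le> D e" if "norm e \<le> 1" for e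
  proof -
    have "- norm g \<le> - norm g * norm e" using that by (simp add: mult_left_le)
    also have "\<dots> \<le> g \<bullet> e" using Cauchy_Schwarz_ineq2[of g e] by (simp add: abs_le_iff)
    finally show ?thesis using lower[of e] exact by (simp add: D_def ds_def)
  qed
  moreover have "d = ds" if "norm d \<le> 1" "D d \<le> D ds" for d
  proof -
    have "g \<bullet> d \<le> - norm g" using lower[of d] exact that(2) by (simp add: D_def ds_def)
    then have "1 \<le> d \<bullet> ds" using False by (simp add: ds_def field_simps inner_commute)
    moreover have "d \<bullet> d \<le> 1" using that(1) by (simp add: power2_norm_eq_inner[symmetric] power_le_one)
    moreover have "ds \<bullet> ds = 1" using \<open>norm ds = 1\<close> by (simp add: power2_norm_eq_inner[symmetric])
    ultimately have "(d - ds) \<bullet> (d - ds) \<le> 0"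
      by (simp add: inner_diff_left inner_diff_right inner_commute)
    then have "(d - ds) \<bullet> (d - ds) = 0" using inner_ge_zero[of "d - ds"] by linarith
    then show "d = ds" by simp
  qed
  ultimately have "(SOME d. norm d \<le> 1 \<and> (\<forall>e. norm e \<le> 1 \<longrightarrow> D d \<le> D e)) = ds"
    using \<open>norm ds = 1\<close> by (intro some_equality) auto
  then have "steepest_dir f phi x = ds"
    unfolding steepest_dir_def D_def using stationary_iff False by simp
  then show ?thesis using exact False by (simp add: ds_def)
qed

lemma riem_grad_eqI:
  assumes "subspace (aff_dir M)" "g \<in> aff_dir M"
    and deriv: "\<And>\<xi>. \<xi> \<in> aff_dir M \<Longrightarrow> ((\<lambda>t. psi (x + t *\<^sub>R \<xi>)) has_real_derivative g \<bullet> \<xi>) (at 0)"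
  shows "riem_grad psi M x = g"
  unfolding riem_grad_def
proof (rule the_equality)
  fix v assume v: "v \<in> aff_dir M \<and> (\<forall>\<xi>\<in>aff_dir M. ((\<lambda>t. psi (x + t *\<^sub>R \<xi>)) has_real_derivative v \<bullet> \<xi>) (at 0))"
  then have "v - g \<in> aff_dir M" using assms(1,2) by (simp add: subspace_diff)
  then have "v \<bullet> (v - g) = g \<bullet> (v - g)"
    using v deriv by (blast intro: DERIV_unique)
  then have "(v - g) \<bullet> (v - g) = 0" by (simp add: inner_diff_left)
  then show "v = g" by simp
qed (use assms in blast)

lemma normal_map_steepest_riem_grad_eq:
  fixes f phi :: "'n::finite vec \<Rightarrow> real" and Lam :: "real^'n^'n"
  assumes f: "(f has_derivative (\<lambda>h. G \<bullet> h)) (at x)" and cvx: "convex_on UNIV phi"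
    and sym: "transpose Lam = Lam" and pd: "\<forall>v. v \<noteq> 0 \<longrightarrow> 0 < v \<bullet> (Lam *v v)"
    and "affine M" "x \<in> M" "open U" "x \<in> U"
    and g: "(g has_derivative (\<lambda>h. g1 \<bullet> h)) (at x)" and eq: "\<forall>y\<in>U \<inter> M. phi y = g y"
    and w: "w \<in> subdiff phi x" and tangent: "G + w \<in> aff_dir M"
  shows "normal_map Lam f phi (tau Lam f phi x) = G + w"
    and "dirderiv (\<lambda>y. f y + phi y) x (steepest_dir f phi x) *\<^sub>R steepest_dir f phi x = G + w"
    and "riem_grad (\<lambda>y. f y + phi y) M x = G + w"
proof -
  have T: "subspace (aff_dir M)" using subspace_aff_dir \<open>affine M\<close> \<open>x \<in> M\<close> by blast
  have line: "((\<lambda>t. phi (x + t *\<^sub>R \<xi>)) has_real_derivative g1 \<bullet> \<xi>) (at 0)" if "\<xi> \<in> aff_dir M" for \<xi>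
    by (rule has_real_derivative_line_if_eq_on_affine[OF \<open>affine M\<close> \<open>x \<in> M\<close> that \<open>open U\<close> \<open>x \<in> U\<close> g eq])
  have on_tangent: "z \<bullet> \<xi> = g1 \<bullet> \<xi>" if "z \<in> subdiff phi x" "\<xi> \<in> aff_dir M" for z \<xi>
    by (rule subgradient_inner_eq_if_has_derivative[OF cvx that(1) line[OF that(2)]])
  have orth: "\<forall>z\<in>subdiff phi x. (w - z) \<bullet> (G + w) = 0"
    using on_tangent[OF w tangent] on_tangent[OF _ tangent] by (simp add: inner_diff_left)
  show "normal_map Lam f phi (tau Lam f phi x) = G + w"
    by (rule normal_map_tau_eq[OF sym pd f w orth])
  have dirderiv: "dirderiv (\<lambda>y. f y + phi y) x e = G \<bullet> e + dirderiv phi x e" for e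
    by (rule dirderiv_add_differentiable[OF f cvx])
  have psi_line: "((\<lambda>t. f (x + t *\<^sub>R \<xi>) + phi (x + t *\<^sub>R \<xi>)) has_real_derivative (G + w) \<bullet> \<xi>) (at 0)"
    if "\<xi> \<in> aff_dir M" for \<xi>
    using DERIV_add[OF has_real_derivative_line[of f G x 0 \<xi>] line[OF that]] f on_tangent[OF w that]
    by (simp add: inner_add_left)
  show "riem_grad (\<lambda>y. f y + phi y) M x = G + w"
    by (rule riem_grad_eqI[OF T tangent psi_line])
  show "dirderiv (\<lambda>y. f y + phi y) x (steepest_dir f phi x) *\<^sub>R steepest_dir f phi x = G + w"
  proof (rule steepest_dir_scaled_eq)
    show "(G + w) \<bullet> e \<le> dirderiv (\<lambda>y. f y + phi y) x e" for e
      using subgradient_inner_le_dirderiv[OF cvx w, of e] by (simp add: dirderiv inner_add_left)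
    define ds where "ds = - (1 / norm (G + w)) *\<^sub>R (G + w)"
    have "ds \<in> aff_dir M"
      unfolding ds_def using T tangent by (simp add: subspace_scale subspace_neg)
    then have "dirderiv phi x ds = w \<bullet> ds"
      using dirderiv_convex_if_has_derivative(1)[OF cvx line] on_tangent[OF w] by simp
    then have "dirderiv (\<lambda>y. f y + phi y) x ds = (G + w) \<bullet> ds"
      by (simp add: dirderiv inner_add_left)
    also have "\<dots> = - norm (G + w)"
      by (cases "G + w = 0") (simp_all add: ds_def dot_square_norm power2_eq_square)
    finally show "dirderiv (\<lambda>y. f y + phi y) x ds = - norm (G + w)" .
  qed (rule zero_mem_subdiff_psi_iff[OF f w orth])
qed

lemma first_order_identities_near:
  fixes f phi :: "'n::finite vec \<Rightarrow> real" and Lam :: "real^'n^'n"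
  assumes gradient: "\<And>x. (f has_derivative (\<lambda>h. G x \<bullet> h)) (at x)" and G: "continuous_on UNIV G"
    and cvx: "convex_on UNIV phi"
    and sym: "transpose Lam = Lam" and pd: "\<forall>v. v \<noteq> 0 \<longrightarrow> 0 < v \<bullet> (Lam *v v)"
    and ps: "partly_smooth_affine phi xs M" and ri: "- G xs \<in> rel_interior (subdiff phi xs)"
  obtains r where "0 < r" "\<forall>x\<in>ball xs r \<inter> M.
      normal_map Lam f phi (tau Lam f phi x)
        = dirderiv (\<lambda>y. f y + phi y) x (steepest_dir f phi x) *\<^sub>R steepest_dir f phi x
    \<and> dirderiv (\<lambda>y. f y + phi y) x (steepest_dir f phi x) *\<^sub>R steepest_dir f phi x
        = riem_grad (\<lambda>y. f y + phi y) M x"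
proof -
  obtain rK where "0 < rK" and tangent: "\<forall>x\<in>ball xs rK \<inter> M. \<exists>w\<in>subdiff phi x. G x + w \<in> aff_dir M"
    using tangent_subgradient_near[OF G ps ri] by blast
  obtain U g where "affine M" "open U" "xs \<in> U" "C2_on U g" and eq: "\<forall>y\<in>U \<inter> M. phi y = g y"
    using ps unfolding partly_smooth_affine_def by blast
  then obtain g1 where g1: "\<And>y. y \<in> U \<Longrightarrow> (g has_derivative (\<lambda>h. g1 y \<bullet> h)) (at y)"
    unfolding C2_on_def by blast
  obtain rU where "0 < rU" "ball xs rU \<subseteq> U" using \<open>open U\<close> \<open>xs \<in> U\<close> open_contains_ball by blast
  show ?thesis
  proof (rule that[of "min rU rK"])
    show "0 < min rU rK" using \<open>0 < rU\<close> \<open>0 < rK\<close> by simp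
    show "\<forall>x\<in>ball xs (min rU rK) \<inter> M.
      normal_map Lam f phi (tau Lam f phi x)
        = dirderiv (\<lambda>y. f y + phi y) x (steepest_dir f phi x) *\<^sub>R steepest_dir f phi x
    \<and> dirderiv (\<lambda>y. f y + phi y) x (steepest_dir f phi x) *\<^sub>R steepest_dir f phi x
        = riem_grad (\<lambda>y. f y + phi y) M x"
    proof
      fix x assume "x \<in> ball xs (min rU rK) \<inter> M"
      then have "x \<in> M" "x \<in> U" "x \<in> ball xs rK \<inter> M"
        using \<open>ball xs rU \<subseteq> U\<close> by auto
      then obtain w where "w \<in> subdiff phi x" "G x + w \<in> aff_dir M" using tangent by blast
      from normal_map_steepest_riem_grad_eq[OF gradient cvx sym pd \<open>affine M\<close>
          \<open>x \<in> M\<close> \<open>open U\<close> \<open>x \<in> U\<close> g1[OF \<open>x \<in> U\<close>] eq this]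
      show "normal_map Lam f phi (tau Lam f phi x)
          = dirderiv (\<lambda>y. f y + phi y) x (steepest_dir f phi x) *\<^sub>R steepest_dir f phi x
        \<and> dirderiv (\<lambda>y. f y + phi y) x (steepest_dir f phi x) *\<^sub>R steepest_dir f phi x
          = riem_grad (\<lambda>y. f y + phi y) M x" by simp
    qed
  qed
qed

theorem lemma5p3:
  fixes f phi :: "real ^ 'n \<Rightarrow> real"
    and Lam :: "real ^ 'n ^ 'n"
    and S :: "nat \<Rightarrow> (real ^ 'n) set" and m :: nat and \<delta> :: ereal and \<kappa> :: real
    and T :: "real ^ 'n \<Rightarrow> real \<Rightarrow> real ^ 'n"
    and xs :: "real ^ 'n" and istar :: nat and M :: "(real ^ 'n) set"
  assumes f_C1: "C1_fun f"
    and phi_convex: "convex_on UNIV phi"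
    and Lam_sym: "transpose Lam = Lam"
    and Lam_pd: "\<forall>v. v \<noteq> 0 \<longrightarrow> 0 < v \<bullet> (Lam *v v)"
    and trunc: "truncatable (\<lambda>y. f y + phi y) S m \<delta> \<kappa> T"
    and stat: "stationary f phi xs"
    and istar_le: "istar \<le> m"
    and xs_in: "xs \<in> S istar"
    and xs_notin: "istar < m \<longrightarrow> xs \<notin> S (Suc istar)"
    and C1_ps: "partly_smooth_affine phi xs M"
    and C1_loc: "\<forall>r. 0 < r \<and> ereal r < Gamma (\<lambda>y. f y + phi y) xs \<longrightarrow>
                   ball xs r \<inter> S istar = ball xs r \<inter> M"
    and C3: "- grad f xs \<in> rel_interior (subdiff phi xs)"
  shows "\<exists>r0. 0 < r0 \<and> ereal r0 < Gamma (\<lambda>y. f y + phi y) xs \<and>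
           (\<forall>x\<in>ball xs r0 \<inter> M.
              normal_map Lam f phi (tau Lam f phi x)
                = dirderiv (\<lambda>y. f y + phi y) x (steepest_dir f phi x) *\<^sub>R steepest_dir f phi x
            \<and> dirderiv (\<lambda>y. f y + phi y) x (steepest_dir f phi x) *\<^sub>R steepest_dir f phi x
                = riem_grad (\<lambda>y. f y + phi y) M x)"
proof -
  obtain G where G: "continuous_on UNIV G" and gradient: "\<And>x. (f has_derivative (\<lambda>h. G x \<bullet> h)) (at x)"
    using f_C1 unfolding C1_fun_def by blast
  obtain c where "0 < c" "xs \<in> closure {u. ereal c \<le> Gamma (\<lambda>y. f y + phi y) u}"
    using truncatable_closure_Gamma_ge[OF trunc] .
  then have Gamma_xs: "ereal c \<le> Gamma (\<lambda>y. f y + phi y) xs"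
    by (rule Gamma_ge_if_closure[OF gradient G phi_convex])
  have "- G xs \<in> rel_interior (subdiff phi xs)" using C3 grad_eqI[OF gradient] by simp
  then obtain r where "0 < r" and identities: "\<forall>x\<in>ball xs r \<inter> M.
      normal_map Lam f phi (tau Lam f phi x)
        = dirderiv (\<lambda>y. f y + phi y) x (steepest_dir f phi x) *\<^sub>R steepest_dir f phi x
    \<and> dirderiv (\<lambda>y. f y + phi y) x (steepest_dir f phi x) *\<^sub>R steepest_dir f phi x
        = riem_grad (\<lambda>y. f y + phi y) M x"
    using first_order_identities_near[OF gradient G phi_convex Lam_sym Lam_pd C1_ps] by blast
  define r0 where "r0 = min (c / 2) r"
  have "r0 < c" using \<open>0 < c\<close> by (simp add: r0_def)
  then have "ereal r0 < ereal c" by simp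
  then have "ereal r0 < Gamma (\<lambda>y. f y + phi y) xs" using Gamma_xs by (rule less_le_trans)
  moreover have "ball xs r0 \<subseteq> ball xs r" by (simp add: r0_def subset_ball)
  ultimately show ?thesis
    using \<open>0 < c\<close> \<open>0 < r\<close> identities by (intro exI[of _ r0]) (auto simp: r0_def)
qed

end
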